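(* Let $(X,\rho)$ be a metric space, $A,B$ nonempty subsets of $X$, and let $F:A\times A\to B$, $G:B\times B\to A$ be such that there exist $\alpha,\beta\ge0$ with $\alpha+\beta<1$ and $$\rho(F(x,x'),G(y,y'))\le\alpha\rho(x,y)+\beta\rho(x',y')+(1-(\alpha+\beta))\,\mathrm{dist}(A,B)$$ for all $x,x'\in A$ and $y,y'\in B$. For $(x_0,y_0)\in A\times A$ define recursively, for $n\ge0$, $$x_{2n+1}=F(x_{2n},y_{2n}),\ y_{2n+1}=F(y_{2n},x_{2n}),\qquad x_{2n+2}=G(x_{2n+1},y_{2n+1}),\ y_{2n+2}=G(y_{2n+1},x_{2n+1}).$$ Then the sequences $\{x_n\}_{n=0}^\infty$ and $\{y_n\}_{n=0}^\infty$ are bounded.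
   Context: $\mathrm{dist}(A,B)=\inf\{\rho(a,b):a\in A,\ b\in B\}$. *)

theory Defs
  imports "HOL-Analysis.Analysis"
begin

definition set_dist :: "'a::metric_space set \<Rightarrow> 'a set \<Rightarrow> real" where
  "set_dist A B = Inf {dist a b | a b. a \<in> A \<and> b \<in> B}"

text \<open>The coupled iteration: the pair (x_n, y_n). Odd steps use F, even steps (n \<ge> 2) use G.\<close>
fun cpl_seq :: "('a \<Rightarrow> 'a \<Rightarrow> 'a) \<Rightarrow> ('a \<Rightarrow> 'a \<Rightarrow> 'a) \<Rightarrow> 'a \<Rightarrow> 'a \<Rightarrow> nat \<Rightarrow> 'a \<times> 'a" where
  "cpl_seq F G x0 y0 0 = (x0, y0)"
| "cpl_seq F G x0 y0 (Suc n) =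
     (let (x, y) = cpl_seq F G x0 y0 n in
      if even n then (F x y, F y x) else (G x y, G y x))"

end

theory Submission
  imports Defs
begin

text \<open>Measure the pair \<open>(x\<^sub>n, y\<^sub>n)\<close> in the \<open>\<ell>\<^sup>1\<close> distance \<open>d\<close> on pairs. Adding the
  contraction inequality to its mirror image shows that one step of the iteration from a point of
  \<open>A \<times> A\<close> and one from a point of \<open>B \<times> B\<close> land at \<open>d\<close>-distance at most \<open>k\<cdot>d + c\<close>,
  where \<open>k = \<alpha> + \<beta> < 1\<close> and \<open>c = 2(1 - k) dist(A, B)\<close>. Since consecutive terms have
  opposite parity, their distances obey this affine recurrence and stay below some \<open>M\<close>; comparing an odd term \<open>m\<close> with the starting point along
  \<open>m \<rightarrow> m+1 \<rightarrow> 1 \<rightarrow> 0\<close> then gives \<open>d(m, 0) \<le> M + k\<cdot>d(m, 0) + c + d(1, 0)\<close>, which bounds the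
  distance of every term from the starting point.\<close>

lemma affine_recurrence_le_max:
  fixes a :: "nat \<Rightarrow> real"
  assumes "0 \<le> k" "k < 1" and rec: "\<And>n. a (Suc n) \<le> k * a n + c"
  shows "a n \<le> max (a 0) (c / (1 - k))"
proof (induction n)
  case 0
  show ?case by simp
next
  case (Suc n)
  let ?M = "max (a 0) (c / (1 - k))"
  have "c / (1 - k) \<le> ?M" by simp
  then have "c \<le> (1 - k) * ?M"
    using \<open>k < 1\<close> by (subst (asm) pos_divide_le_eq) (simp_all add: mult.commute)
  moreover have "k * a n \<le> k * ?M"
    using Suc.IH \<open>0 \<le> k\<close> by (rule mult_left_mono)
  ultimately show ?case
    using rec[of n] by (simp add: algebra_simps)
qed

lemma alternating_contraction_bounded:
  fixes d :: "nat \<Rightarrow> nat \<Rightarrow> real"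
  assumes tri: "\<And>i j l. d i j \<le> d i l + d l j"
    and "0 \<le> k" "k < 1"
    and step: "\<And>i j. even i \<noteq> even j \<Longrightarrow> d (Suc i) (Suc j) \<le> k * d i j + c"
  obtains C where "\<And>n. d n 0 \<le> C"
proof -
  define M where "M = max (d 0 1) (c / (1 - k))"
  have consecutive: "d n (Suc n) \<le> M" for n
    using affine_recurrence_le_max[where a = "\<lambda>n. d n (Suc n)", OF \<open>0 \<le> k\<close> \<open>k < 1\<close>] step
    by (simp add: M_def)
  define C where "C = (M + c + d 1 0) / (1 - k)"
  have odd_bound: "d m 0 \<le> C" if "odd m" for m
  proof -
    have "d m 0 \<le> d m (Suc m) + (d (Suc m) 1 + d 1 0)"
      using tri[of m 0 "Suc m"] tri[of "Suc m" 0 1] by linarith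
    also have "\<dots> \<le> M + (k * d m 0 + c) + d 1 0"
      using consecutive[of m] step[of m 0] \<open>odd m\<close> by simp
    finally have "(1 - k) * d m 0 \<le> M + c + d 1 0"
      by (simp add: algebra_simps)
    then show ?thesis
      using \<open>k < 1\<close> by (simp add: C_def pos_le_divide_eq mult.commute)
  qed
  have "d n 0 \<le> max C (M + C)" for n
  proof (cases "odd n")
    case True
    then show ?thesis using odd_bound by fastforce
  next
    case False
    have "d n 0 \<le> d n (Suc n) + d (Suc n) 0" by (rule tri)
    also have "\<dots> \<le> M + C"
      using consecutive[of n] odd_bound[of "Suc n"] False by simp
    finally show ?thesis by simp
  qed
  then show thesis by (rule that)
qed

definition pair_dist :: "'a::metric_space \<times> 'a \<Rightarrow> 'a \<times> 'a \<Rightarrow> real" where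
  "pair_dist p q = dist (fst p) (fst q) + dist (snd p) (snd q)"

lemma pair_dist_commute: "pair_dist p q = pair_dist q p"
  by (simp add: pair_dist_def dist_commute)

lemma pair_dist_triangle: "pair_dist p q \<le> pair_dist p r + pair_dist r q"
  using dist_triangle[of "fst p" "fst q" "fst r"] dist_triangle[of "snd p" "snd q" "snd r"]
  by (simp add: pair_dist_def)

lemma dist_le_pair_dist:
  "dist (fst p) (fst q) \<le> pair_dist p q" "dist (snd p) (snd q) \<le> pair_dist p q"
  by (simp_all add: pair_dist_def)

lemma pair_dist_coupled_step_le:
  assumes contr: "\<And>x x' y y'. x \<in> A \<Longrightarrow> x' \<in> A \<Longrightarrow> y \<in> B \<Longrightarrow> y' \<in> B \<Longrightarrow>
        dist (F x x') (G y y') \<le> \<alpha> * dist x y + \<beta> * dist x' y' + (1 - (\<alpha> + \<beta>)) * set_dist A B"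
    and "x \<in> A" "x' \<in> A" "y \<in> B" "y' \<in> B"
  shows "pair_dist (F x x', F x' x) (G y y', G y' y)
    \<le> (\<alpha> + \<beta>) * pair_dist (x, x') (y, y') + 2 * (1 - (\<alpha> + \<beta>)) * set_dist A B"
  using contr[of x x' y y'] contr[of x' x y' y] assms(2-)
  by (simp add: pair_dist_def algebra_simps)

lemma cpl_seq_Suc_even:
  "even n \<Longrightarrow> cpl_seq F G x0 y0 (Suc n)
     = (let (x, y) = cpl_seq F G x0 y0 n in (F x y, F y x))"
  and cpl_seq_Suc_odd:
  "odd n \<Longrightarrow> cpl_seq F G x0 y0 (Suc n)
     = (let (x, y) = cpl_seq F G x0 y0 n in (G x y, G y x))"
  by (simp_all add: split_beta)

lemma cpl_seq_mem:
  assumes F_maps: "\<And>x x'. x \<in> A \<Longrightarrow> x' \<in> A \<Longrightarrow> F x x' \<in> B"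
    and G_maps: "\<And>y y'. y \<in> B \<Longrightarrow> y' \<in> B \<Longrightarrow> G y y' \<in> A"
    and "x0 \<in> A" "y0 \<in> A"
  shows "cpl_seq F G x0 y0 n \<in> (if even n then A \<times> A else B \<times> B)"
proof (induction n)
  case 0
  then show ?case using \<open>x0 \<in> A\<close> \<open>y0 \<in> A\<close> by simp
next
  case (Suc n)
  then show ?case
    using F_maps G_maps
    by (cases "even n") (auto simp: cpl_seq_Suc_even cpl_seq_Suc_odd split_beta)
qed

theorem lemma34:
  fixes A B :: "'a::metric_space set"
    and F G :: "'a \<Rightarrow> 'a \<Rightarrow> 'a"
    and \<alpha> \<beta> :: real
    and x0 y0 :: 'a
  assumes "A \<noteq> {}" and "B \<noteq> {}"
    and F_maps: "\<And>x x'. x \<in> A \<Longrightarrow> x' \<in> A \<Longrightarrow> F x x' \<in> B"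
    and G_maps: "\<And>y y'. y \<in> B \<Longrightarrow> y' \<in> B \<Longrightarrow> G y y' \<in> A"
    and "\<alpha> \<ge> 0" and "\<beta> \<ge> 0" and "\<alpha> + \<beta> < 1"
    and contr: "\<And>x x' y y'. x \<in> A \<Longrightarrow> x' \<in> A \<Longrightarrow> y \<in> B \<Longrightarrow> y' \<in> B \<Longrightarrow>
        dist (F x x') (G y y') \<le> \<alpha> * dist x y + \<beta> * dist x' y' + (1 - (\<alpha> + \<beta>)) * set_dist A B"
    and "x0 \<in> A" and "y0 \<in> A"
  shows "bounded (range (\<lambda>n. fst (cpl_seq F G x0 y0 n)))
       \<and> bounded (range (\<lambda>n. snd (cpl_seq F G x0 y0 n)))"
proof -
  let ?p = "cpl_seq F G x0 y0"
  have mem: "?p n \<in> (if even n then A \<times> A else B \<times> B)" for n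
    using cpl_seq_mem[OF F_maps G_maps \<open>x0 \<in> A\<close> \<open>y0 \<in> A\<close>] .
  have step: "pair_dist (?p (Suc i)) (?p (Suc j))
      \<le> (\<alpha> + \<beta>) * pair_dist (?p i) (?p j) + 2 * (1 - (\<alpha> + \<beta>)) * set_dist A B"
    if "even i" "odd j" for i j
    using pair_dist_coupled_step_le[OF contr, of "fst (?p i)" "snd (?p i)" "fst (?p j)" "snd (?p j)"]
      mem[of i] mem[of j] that
    by (auto simp: cpl_seq_Suc_even cpl_seq_Suc_odd split_beta mem_Times_iff)
  obtain C where C: "\<And>n. pair_dist (?p n) (?p 0) \<le> C"
  proof (rule alternating_contraction_bounded[OF pair_dist_triangle])
    show "0 \<le> \<alpha> + \<beta>" "\<alpha> + \<beta> < 1" using assms by auto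
    show "pair_dist (?p (Suc i)) (?p (Suc j))
        \<le> (\<alpha> + \<beta>) * pair_dist (?p i) (?p j) + 2 * (1 - (\<alpha> + \<beta>)) * set_dist A B"
      if "even i \<noteq> even j" for i j
      using that step[of i j] step[of j i] by (cases "even i") (auto simp: pair_dist_commute)
  qed (rule that)
  have "dist x0 (fst (?p n)) \<le> C" "dist y0 (snd (?p n)) \<le> C" for n
    using dist_le_pair_dist[of "?p 0" "?p n"] C[of n] by (auto simp: pair_dist_commute)
  then show ?thesis
    unfolding bounded_def by blast
qed

end
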